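(* Let $B$ be a finite brace such that every Sylow subgroup of the additive group $(B,+)$ and every Sylow subgroup of the multiplicative group $(B,\cdot)$ is cyclic. Then $B$ is supersoluble.
   Context: A brace (skew left brace) is a set $B$ with two binary operations $+$ and $\cdot$ (the product written by juxtaposition) such that $(B,+)$ and $(B,\cdot)$ are groups and $a(b+c)=ab-a+ac$ for all $a,b,c\in B$; the two groups have the same identity $0$. For $a,b\in B$ put $\lambda_a(b)=-a+ab$; then $\lambda\colon (B,\cdot)\to\operatorname{Aut}(B,+)$, $a\mapsto\lambda_a$, is a group homomorphism. A subbrace is a subset that is a subgroup of both $(B,+)$ and $(B,\cdot)$. An ideal of $B$ is a subbrace $I$ that is normal in $(B,+)$ and in $(B,\cdot)$ and satisfies $\lambda_b(I)\subseteq I$ for all $b\in B$; then $B/I$ is naturally a brace. $\operatorname{Soc}(B)=\operatorname{Ker}\lambda\cap Z(B,+)$, an ideal. A brace $B$ is supersoluble if there is a finite chain of ideals $\{0\}=I_0\le I_1\le\dots\le I_n=B$ of $B$ such that for each $0\le i<n$, either $(I_{i+1}/I_i,+)$ is infinite cyclic and $I_{i+1}/I_i\le\operatorname{Soc}(B/I_i)$, or $I_{i+1}/I_i$ has prime order. *)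

theory Defs
  imports "HOL-Algebra.Algebra" "HOL-Computational_Algebra.Primes"
begin

text \<open>A (skew left) brace is given by two group structures A (the additive group,
  whose operation is written with the HOL-Algebra multiplication symbol) and M
  (the multiplicative group) on the same carrier, with the same identity, and
  satisfying a(b+c) = ab - a + ac.\<close>

definition brace :: "'a monoid \<Rightarrow> 'a monoid \<Rightarrow> bool" where
  "brace A M \<longleftrightarrow> group A \<and> group M \<and> carrier A = carrier M \<and> \<one>\<^bsub>A\<^esub> = \<one>\<^bsub>M\<^esub> \<and>
     (\<forall>a\<in>carrier A. \<forall>b\<in>carrier A. \<forall>c\<in>carrier A.
        a \<otimes>\<^bsub>M\<^esub> (b \<otimes>\<^bsub>A\<^esub> c) = (a \<otimes>\<^bsub>M\<^esub> b) \<otimes>\<^bsub>A\<^esub> inv\<^bsub>A\<^esub> a \<otimes>\<^bsub>A\<^esub> (a \<otimes>\<^bsub>M\<^esub> c))"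

definition brace_lambda :: "'a monoid \<Rightarrow> 'a monoid \<Rightarrow> 'a \<Rightarrow> 'a \<Rightarrow> 'a" where
  "brace_lambda A M a b = inv\<^bsub>A\<^esub> a \<otimes>\<^bsub>A\<^esub> (a \<otimes>\<^bsub>M\<^esub> b)"

definition brace_ideal :: "'a monoid \<Rightarrow> 'a monoid \<Rightarrow> 'a set \<Rightarrow> bool" where
  "brace_ideal A M I \<longleftrightarrow> subgroup I A \<and> subgroup I M \<and> normal I A \<and> normal I M \<and>
     (\<forall>b\<in>carrier A. brace_lambda A M b ` I \<subseteq> I)"

definition brace_socle :: "'a monoid \<Rightarrow> 'a monoid \<Rightarrow> 'a set" where
  "brace_socle A M = {a \<in> carrier A. (\<forall>b\<in>carrier A. brace_lambda A M a b = b) \<and>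
                                    (\<forall>b\<in>carrier A. a \<otimes>\<^bsub>A\<^esub> b = b \<otimes>\<^bsub>A\<^esub> a)}"

text \<open>The quotient brace B/I is (A Mod I, M Mod I); for an ideal I the cosets of I
  in both groups coincide.\<close>
definition factor_cosets :: "'a monoid \<Rightarrow> 'a set \<Rightarrow> 'a set \<Rightarrow> 'a set set" where
  "factor_cosets A I J = (\<lambda>x. I #>\<^bsub>A\<^esub> x) ` J"

definition brace_supersoluble :: "'a monoid \<Rightarrow> 'a monoid \<Rightarrow> bool" where
  "brace_supersoluble A M \<longleftrightarrow>
     (\<exists>(I :: nat \<Rightarrow> 'a set) n.
        I 0 = {\<one>\<^bsub>A\<^esub>} \<and> I n = carrier A \<and>
        (\<forall>i\<le>n. brace_ideal A M (I i)) \<and>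
        (\<forall>i<n. I i \<subseteq> I (Suc i)) \<and>
        (\<forall>i<n. let Q = factor_cosets A (I i) (I (Suc i)) in
           (infinite Q \<and> cyclic_group (subgroup_generated (A Mod (I i)) Q) \<and>
              Q \<subseteq> brace_socle (A Mod (I i)) (M Mod (I i)))
           \<or> Factorial_Ring.prime (card Q)))"

definition sylow_subgroup :: "('a, 'b) monoid_scheme \<Rightarrow> nat \<Rightarrow> 'a set \<Rightarrow> bool" where
  "sylow_subgroup G p P \<longleftrightarrow> Factorial_Ring.prime p \<and> subgroup P G \<and>
     card P = p ^ multiplicity p (order G)"

end

theory Submission
  imports Defs "HOL-Number_Theory.Number_Theory" "HOL-Combinatorics.Orbits"
begin

text \<open>
  A finite group all of whose Sylow subgroups are cyclic (a Z-group) has a Sylow tower. If \<open>p\<close> is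
  the smallest prime dividing \<open>|G| = p\<^sup>a m\<close>, the cyclic Sylow \<open>p\<close>-subgroup \<open>P\<close> controls its own
  fusion, so the transfer \<open>G \<rightarrow> P\<close> restricts to \<open>x \<mapsto> x\<^sup>m\<close> on \<open>P\<close>; it is therefore onto, and its
  kernel is a normal \<open>p\<close>-complement, again a Z-group. By induction on \<open>|G|\<close>, for every divisor \<open>d\<close>
  of \<open>|G|\<close> that contains the full \<open>r\<close>-part of \<open>|G|\<close> for all primes \<open>r\<close> above the least prime
  factor of \<open>d\<close>, the solutions of \<open>x\<^sup>d = 1\<close> form a subgroup of order \<open>d\<close>.

  In a brace whose two groups are Z-groups, the set \<open>{x. d x = 0}\<close> is mapped into itself by the
  automorphisms \<open>\<lambda>\<^sub>a\<close>, hence is closed under the multiplication; having \<open>d\<close> elements it equals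
  \<open>{x. x\<^sup>d = 1}\<close> in the multiplicative group, so it is characteristic in both groups and an ideal.
  Dividing \<open>d = |B|\<close> repeatedly by its least prime factor gives a chain of such ideals whose factors
  have prime order.
\<close>

section \<open>Number theory\<close>

lemma coprime_totient_prime_power:
  fixes p b k :: nat
  assumes p: "Factorial_Ring.prime p"
    and large: "\<And>r. Factorial_Ring.prime r \<Longrightarrow> r dvd k \<Longrightarrow> p < r"
  shows "coprime k (totient (p ^ b))"
proof (rule coprimeI)
  fix r assume rk: "r dvd k" and rt: "r dvd totient (p ^ b)"
  show "is_unit r"
  proof (rule ccontr)
    assume "\<not> is_unit r"
    then obtain q where q: "Factorial_Ring.prime q" "q dvd r"
      using prime_factor_nat by auto
    have "p < q" using large q rk dvd_trans by blast
    have "b > 0" using rt q by (cases b) (auto simp: dvd_trans)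
    then have "q dvd p ^ (b - 1) * (p - 1)"
      using q rt p by (metis dvd_trans totient_prime_power)
    then consider "q dvd p" | "q dvd p - 1"
      using q(1) prime_dvd_mult_iff prime_dvd_power by blast
    then show False
    proof cases
      case 1
      then show False using \<open>p < q\<close> p prime_gt_0_nat by (auto dest: dvd_imp_le)
    next
      case 2
      moreover have "p - 1 > 0" using p prime_gt_1_nat by auto
      ultimately show False using \<open>p < q\<close> by (auto dest: dvd_imp_le)
    qed
  qed
qed

lemma cong_1_if_pow_cong_1:
  fixes p b k e :: nat
  assumes p: "Factorial_Ring.prime p"
    and large: "\<And>r. Factorial_Ring.prime r \<Longrightarrow> r dvd k \<Longrightarrow> p < r"
    and cop: "coprime e p" and ek: "[e ^ k = 1] (mod p ^ b)"
  shows "[e = 1] (mod p ^ b)"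
proof -
  have "coprime (p ^ b) e" using cop by (simp add: coprime_commute)
  then have "ord (p ^ b) e dvd totient (p ^ b)" by (rule order_divides_totient)
  moreover have "ord (p ^ b) e dvd k" using ek ord_divides by blast
  moreover have "coprime k (totient (p ^ b))" using coprime_totient_prime_power[OF p large] .
  ultimately have "ord (p ^ b) e dvd 1"
    using coprime_common_divisor by (metis coprime_commute)
  then show ?thesis using ord_divides[of e 1] by simp
qed

lemma smallest_prime_factor:
  fixes n :: nat
  assumes "n \<noteq> 1"
  obtains p where "Factorial_Ring.prime p" "p dvd n"
    "\<And>q. Factorial_Ring.prime q \<Longrightarrow> q dvd n \<Longrightarrow> p \<le> q"
proof -
  define p where "p = (LEAST q. Factorial_Ring.prime q \<and> q dvd n)"
  have "\<exists>q. Factorial_Ring.prime q \<and> q dvd n" using prime_factor_nat assms by blast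
  then have "Factorial_Ring.prime p \<and> p dvd n" unfolding p_def by (rule LeastI_ex)
  moreover have "p \<le> q" if "Factorial_Ring.prime q" "q dvd n" for q
    using that by (simp add: p_def Least_le)
  ultimately show ?thesis using that by blast
qed

text \<open>The orders of the terms of a Sylow tower of a group of order \<open>n\<close>.\<close>

definition tower_divisor :: "nat \<Rightarrow> nat \<Rightarrow> bool" where
  "tower_divisor n d \<longleftrightarrow> d dvd n \<and>
     (\<forall>q r. Factorial_Ring.prime q \<longrightarrow> Factorial_Ring.prime r \<longrightarrow> q dvd d \<longrightarrow> r dvd n \<longrightarrow> q < r \<longrightarrow>
        multiplicity r d = multiplicity r n)"

lemma tower_divisor_refl: "tower_divisor n n"
  by (simp add: tower_divisor_def)

lemma tower_divisor_cofactor: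
  fixes n m p a d :: nat
  assumes t: "tower_divisor n d" and n: "n = p ^ a * m" and p: "Factorial_Ring.prime p"
    and pm: "\<not> p dvd m" and pd: "\<not> p dvd d" and m0: "m > 0"
  shows "tower_divisor m d"
proof -
  have cop: "coprime d (p ^ a)" using pd p
    by (metis coprime_commute coprime_power_right_iff prime_imp_coprime)
  have "d dvd p ^ a * m" using t n by (simp add: tower_divisor_def)
  then have dm: "d dvd m" using coprime_dvd_mult_right_iff[OF cop] by blast
  have "multiplicity r d = multiplicity r m"
    if q: "Factorial_Ring.prime q" and r: "Factorial_Ring.prime r" and qd: "q dvd d"
      and rm: "r dvd m" and qr: "q < r" for q r
  proof -
    have "multiplicity r d = multiplicity r n" using t q r qd qr rm n by (simp add: tower_divisor_def)
    moreover have "r \<noteq> p" using rm pm by blast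
    then have "multiplicity r n = multiplicity r m"
      using n p r m0 prime_gt_0_nat
      by (simp add: prime_elem_multiplicity_mult_distrib multiplicity_distinct_prime_power)
    ultimately show ?thesis by simp
  qed
  then show ?thesis using dm by (simp add: tower_divisor_def)
qed

lemma tower_divisor_smallest_prime:
  fixes n m p a d :: nat
  assumes t: "tower_divisor n d" and n: "n = p ^ a * m" and p: "Factorial_Ring.prime p"
    and pm: "\<not> p dvd m" and pd: "p dvd d" and m0: "m > 0"
    and pmin: "\<And>q. Factorial_Ring.prime q \<Longrightarrow> q dvd n \<Longrightarrow> p \<le> q"
  shows "d = m * p ^ multiplicity p d" and "multiplicity p d \<le> a"
proof -
  have dn: "d dvd n" using t by (simp add: tower_divisor_def)
  have n0: "n \<noteq> 0" using n m0 p prime_gt_0_nat by simp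
  then have d0: "d \<noteq> 0" using dn by auto
  have "multiplicity p d \<le> multiplicity p n" using dn d0 n0 by (simp add: dvd_imp_multiplicity_le)
  also have "multiplicity p n = a" using n m0 pm p
    by (simp add: prime_elem_multiplicity_mult_distrib multiplicity_prime_power not_dvd_imp_multiplicity_0)
  finally show "multiplicity p d \<le> a" .
  have "multiplicity r d = multiplicity r (m * p ^ multiplicity p d)"
    if r: "Factorial_Ring.prime r" for r
  proof (cases "r = p")
    case True
    then show ?thesis using p m0 pm
      by (simp add: prime_elem_multiplicity_mult_distrib multiplicity_prime_power not_dvd_imp_multiplicity_0)
  next
    case False
    have rhs: "multiplicity r (m * p ^ multiplicity p d) = multiplicity r m"
      using False p r m0 prime_gt_0_nat
      by (simp add: prime_elem_multiplicity_mult_distrib multiplicity_distinct_prime_power)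
    have mrn: "multiplicity r n = multiplicity r m"
      using False p r m0 n prime_gt_0_nat
      by (simp add: prime_elem_multiplicity_mult_distrib multiplicity_distinct_prime_power)
    show ?thesis
    proof (cases "r dvd n")
      case True
      have "p < r" using pmin[OF r True] False by simp
      then have "multiplicity r d = multiplicity r n" using t p r pd True by (simp add: tower_divisor_def)
      then show ?thesis using rhs mrn by simp
    next
      case False
      then have "\<not> r dvd d" "\<not> r dvd m" using dn n by (auto intro: dvd_trans)
      then show ?thesis using rhs by (simp add: not_dvd_imp_multiplicity_0)
    qed
  qed
  moreover have "m * p ^ multiplicity p d \<noteq> 0" using m0 p by simp
  ultimately have "normalize d = normalize (m * p ^ multiplicity p d)"
    using multiplicity_eq_imp_eq[OF d0] by blast
  then show "d = m * p ^ multiplicity p d" by simp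
qed

lemma tower_divisor_div_smallest_prime:
  assumes t: "tower_divisor n d" and q: "Factorial_Ring.prime q" "q dvd d"
    and qmin: "\<And>r. Factorial_Ring.prime r \<Longrightarrow> r dvd d \<Longrightarrow> q \<le> r"
  shows "tower_divisor n (d div q)"
proof (cases "d = 0")
  case True
  then show ?thesis using t by simp
next
  case False
  define d' where "d' = d div q"
  have dd': "d = d' * q" using q by (simp add: d'_def)
  then have d'0: "d' \<noteq> 0" using False by auto
  have "multiplicity r d' = multiplicity r n"
    if q': "Factorial_Ring.prime q'" and r: "Factorial_Ring.prime r" and qd': "q' dvd d'"
      and rn: "r dvd n" and qr: "q' < r" for q' r
  proof -
    have "q' dvd d" using qd' dd' by simp
    then have "q \<le> q'" using qmin[OF q'] by simp
    then have "r \<noteq> q" using qr by simp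
    then have "multiplicity r d = multiplicity r d'"
      using dd' r q d'0 by (simp add: prime_elem_multiplicity_mult_distrib prime_multiplicity_other)
    moreover have "multiplicity r d = multiplicity r n"
      using t q' r \<open>q' dvd d\<close> rn qr by (simp add: tower_divisor_def)
    ultimately show ?thesis by simp
  qed
  moreover have "d' dvd n"
    using t dd' dvd_mult_left[of d' q n] by (simp add: tower_divisor_def)
  ultimately show ?thesis by (simp add: tower_divisor_def d'_def)
qed

section \<open>Fixed points of a map of prime power period\<close>

lemma self_in_orbit:
  assumes "(f ^^ n) x = x" "0 < n"
  shows "x \<in> orbit f x"
proof -
  have "x = (f ^^ n) x \<and> 0 < n" using assms by simp
  then show ?thesis unfolding orbit_altdef by blast
qed

lemma funpow_dist1_dvd:
  assumes "(f ^^ n) x = x"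
  shows "funpow_dist1 f x x dvd n"
proof (cases "n = 0")
  case False
  then have orb: "x \<in> orbit f x" using self_in_orbit[OF assms] by simp
  define d where "d = funpow_dist1 f x x"
  have "(f ^^ (n mod d)) x = (f ^^ n) x"
    by (rule funpow_mod_eq) (use funpow_dist1_prop[OF orb] in \<open>simp only: d_def\<close>)
  then have "(f ^^ (n mod d)) x = x" using assms by (simp only:)
  moreover have "n mod d < d" by (simp add: d_def)
  ultimately have "n mod d = 0"
    using funpow_dist1_least[of "n mod d" f x x] unfolding d_def by blast
  then show ?thesis by (simp add: d_def dvd_eq_mod_eq_0)
qed simp

lemma card_orbit:
  assumes "x \<in> orbit f x"
  shows "card (orbit f x) = funpow_dist1 f x x"
  using card_image[OF inj_on_funpow_dist1[OF assms]] orbit_conv_funpow_dist1[OF assms] by simp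

lemma orbit_subset_invariant:
  assumes "f ` S \<subseteq> S" "x \<in> S"
  shows "orbit f x \<subseteq> S"
proof
  fix y assume "y \<in> orbit f x"
  then show "y \<in> S" by induction (use assms in auto)
qed

lemma orbit_induct:
  assumes "finite S" "f ` S \<subseteq> S" "0 < N" "\<And>x. x \<in> S \<Longrightarrow> (f ^^ N) x = x"
    and empty: "Q {}"
    and orbit: "\<And>T x. finite T \<Longrightarrow> f ` T \<subseteq> T \<Longrightarrow> (\<And>y. y \<in> T \<Longrightarrow> (f ^^ N) y = y) \<Longrightarrow>
      x \<in> T \<Longrightarrow> Q (T - orbit f x) \<Longrightarrow> Q T"
  shows "Q S"
  using assms(1,2,4)
proof (induction "card S" arbitrary: S rule: less_induct)
  case less
  show ?case
  proof (cases "S = {}")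
    case False
    then obtain x where x: "x \<in> S" by blast
    have x_orbit: "x \<in> orbit f x"
      using self_in_orbit[OF less.prems(3)[OF x] \<open>0 < N\<close>] .
    obtain N' where N': "N = Suc N'" using \<open>0 < N\<close> gr0_implies_Suc by blast
    have "y \<in> orbit f x" if "y \<in> S" "f y \<in> orbit f x" for y
    proof -
      have "(f ^^ N') (f y) = y"
        using less.prems(3)[OF \<open>y \<in> S\<close>] by (simp only: N' funpow_Suc_right o_apply)
      then show ?thesis using funpow_in_orbit[OF \<open>f y \<in> orbit f x\<close>, of N'] by simp
    qed
    then have "f ` (S - orbit f x) \<subseteq> S - orbit f x" using less.prems(2) by blast
    moreover have "card (S - orbit f x) < card S"
      using x x_orbit less.prems(1) by (intro psubset_card_mono) auto
    ultimately have "Q (S - orbit f x)"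
      using less.hyps less.prems by (metis Diff_iff finite_Diff)
    with less.prems x show ?thesis by (rule orbit)
  qed (use empty in simp)
qed

lemma prime_dvd_card_orbit:
  assumes p: "Factorial_Ring.prime p" and per: "(f ^^ (p ^ c)) x = x" and moved: "f x \<noteq> x"
  shows "p dvd card (orbit f x)"
proof -
  have x_orbit: "x \<in> orbit f x" using self_in_orbit[OF per] p by (simp add: prime_gt_0_nat)
  obtain i where i: "funpow_dist1 f x x = p ^ i"
    using funpow_dist1_dvd[OF per] divides_primepow_nat[OF p] by auto
  moreover have "funpow_dist1 f x x \<noteq> 1"
  proof
    assume "funpow_dist1 f x x = 1"
    then have "(f ^^ 1) x = x" using funpow_dist1_prop[OF x_orbit] by (simp only:)
    with moved show False by simp
  qed
  ultimately show ?thesis using card_orbit[OF x_orbit] by (cases i) auto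
qed

lemma fixpoint_notin_orbit:
  assumes "x \<in> orbit f x" "f x \<noteq> x" "f y = y"
  shows "y \<notin> orbit f x"
proof
  assume "y \<in> orbit f x"
  then have "x \<in> orbit f y" by (rule orbit_swap[OF assms(1)])
  then show False using assms(2,3) by (simp add: orbit_eq_singleton_iff[THEN iffD2])
qed

lemma card_fixpoints_cong:
  assumes "finite S" "f ` S \<subseteq> S" and p: "Factorial_Ring.prime p"
    and "\<And>x. x \<in> S \<Longrightarrow> (f ^^ (p ^ c)) x = x"
  shows "[card S = card {x \<in> S. f x = x}] (mod p)"
proof (rule orbit_induct[OF assms(1,2) zero_less_power[OF prime_gt_0_nat[OF p]] assms(4),
      where Q = "\<lambda>S. [card S = card {x \<in> S. f x = x}] (mod p)"])
  fix S x
  assume fin: "finite S" and inv: "f ` S \<subseteq> S" and per: "\<And>y. y \<in> S \<Longrightarrow> (f ^^ (p ^ c)) y = y"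
    and x: "x \<in> S" and IH: "[card (S - orbit f x) = card {y \<in> S - orbit f x. f y = y}] (mod p)"
  have sub: "orbit f x \<subseteq> S" by (rule orbit_subset_invariant[OF inv x])
  have card_S: "card S = card (orbit f x) + card (S - orbit f x)"
    using card_Diff_subset[OF finite_subset[OF sub fin] sub] card_mono[OF fin sub] by simp
  show "[card S = card {y \<in> S. f y = y}] (mod p)"
  proof (cases "f x = x")
    case True
    then have "orbit f x = {x}" by (simp add: orbit_eq_singleton_iff)
    moreover have "{y \<in> S. f y = y} = insert x {y \<in> S - {x}. f y = y}"
      using True x by auto
    ultimately show ?thesis
      using cong_add[OF cong_refl[of 1] IH] card_S fin by simp
  next
    case False
    have "[card (orbit f x) = 0] (mod p)"
      using prime_dvd_card_orbit[OF p per[OF x] False] by (simp add: cong_0_iff)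
    moreover have "x \<in> orbit f x" using self_in_orbit[OF per[OF x]] p by (simp add: prime_gt_0_nat)
    then have "{y \<in> S. f y = y} = {y \<in> S - orbit f x. f y = y}"
      using fixpoint_notin_orbit[of x f] False by auto
    ultimately show ?thesis
      using cong_add[OF _ IH, of "card (orbit f x)" 0] card_S by simp
  qed
qed auto

section \<open>Powers and conjugates in a group\<close>

context group begin

lemma inv_mult_cancel_left [simp]:
  "x \<in> carrier G \<Longrightarrow> y \<in> carrier G \<Longrightarrow> inv x \<otimes> (x \<otimes> y) = y"
  by (simp add: m_assoc[symmetric])

lemma mult_inv_cancel_left [simp]:
  "x \<in> carrier G \<Longrightarrow> y \<in> carrier G \<Longrightarrow> x \<otimes> (inv x \<otimes> y) = y"
  by (simp add: m_assoc[symmetric])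

lemma conj_nat_pow:
  assumes "t \<in> carrier G" "y \<in> carrier G"
  shows "(t \<otimes> y \<otimes> inv t) [^] (n::nat) = t \<otimes> y [^] n \<otimes> inv t"
proof (induction n)
  case (Suc n)
  have "(t \<otimes> y \<otimes> inv t) [^] Suc n = (t \<otimes> y [^] n \<otimes> inv t) \<otimes> (t \<otimes> y \<otimes> inv t)"
    using Suc assms by simp
  also have "\<dots> = t \<otimes> (y [^] n \<otimes> y) \<otimes> inv t"
    using assms by (simp add: m_assoc)
  finally show ?case using assms by simp
qed (use assms in simp)

lemma ord_conj:
  assumes t: "t \<in> carrier G" and y: "y \<in> carrier G"
  shows "ord (t \<otimes> y \<otimes> inv t) = ord y"
proof -
  have "t \<otimes> z \<otimes> inv t = \<one> \<longleftrightarrow> z = \<one>" if z: "z \<in> carrier G" for z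
  proof
    assume "t \<otimes> z \<otimes> inv t = \<one>"
    then have "inv t \<otimes> (t \<otimes> z \<otimes> inv t) \<otimes> t = \<one>" using t by simp
    then show "z = \<one>" using t z by (simp add: m_assoc)
  qed (use t in simp)
  then have "(t \<otimes> y \<otimes> inv t) [^] n = \<one> \<longleftrightarrow> ord y dvd n" for n :: nat
    using t y by (simp add: conj_nat_pow pow_eq_id)
  then show ?thesis using t y by (simp add: ord_unique)
qed

lemma iterated_conj_eq_pow:
  assumes t: "t \<in> carrier G" and y: "y \<in> carrier G" and e: "t \<otimes> y \<otimes> inv t = y [^] (e::nat)"
  shows "t [^] (j::nat) \<otimes> y \<otimes> inv (t [^] j) = y [^] (e ^ j)"
proof (induction j)
  case (Suc j)
  have "t [^] Suc j = t \<otimes> t [^] j" using t nat_pow_Suc2 by blast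
  then have "t [^] Suc j \<otimes> y \<otimes> inv (t [^] Suc j) = t \<otimes> (t [^] j \<otimes> y \<otimes> inv (t [^] j)) \<otimes> inv t"
    using t y by (simp add: inv_mult_group m_assoc)
  also have "\<dots> = (t \<otimes> y \<otimes> inv t) [^] (e ^ j)" using Suc t y by (simp add: conj_nat_pow)
  finally show ?case using e y by (simp add: nat_pow_pow)
qed (use y in simp)

lemma eq_one_if_coprime_pow_eq_one:
  assumes z: "z \<in> carrier G" and "z [^] (k::nat) = \<one>" "z [^] (l::nat) = \<one>" "coprime k l"
  shows "z = \<one>"
proof -
  have "ord z dvd k" "ord z dvd l" using assms by (simp_all add: pow_eq_id)
  then have "ord z = 1" using coprime_common_divisor_nat[OF assms(4)] by blast
  then show ?thesis using z ord_eq_1 by blast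
qed

lemma pow_eq_self_iff_cong:
  assumes y: "y \<in> carrier G"
  shows "y [^] (m::nat) = y \<longleftrightarrow> [m = 1] (mod ord y)"
proof (cases m)
  case 0
  then show ?thesis using y ord_eq_1[OF y] by (auto simp: cong_def)
next
  case (Suc n)
  have "y [^] m = y \<longleftrightarrow> y [^] n = \<one>"
    using y Suc by (metis l_cancel_one' nat_pow_Suc2 nat_pow_closed)
  also have "\<dots> \<longleftrightarrow> [m = 1] (mod ord y)"
    using y Suc by (simp add: pow_eq_id cong_altdef_nat)
  finally show ?thesis .
qed

lemma pow_eq_self_if_pow_power_eq_self:
  fixes e k :: nat
  assumes y: "y \<in> carrier G" and p: "Factorial_Ring.prime p" and oy: "ord y = p ^ b"
    and large: "\<And>r. Factorial_Ring.prime r \<Longrightarrow> r dvd k \<Longrightarrow> p < r" and k: "k > 0"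
    and yek: "y [^] (e ^ k) = y"
  shows "y [^] e = y"
proof (cases "b = 0")
  case True
  then show ?thesis using y oy ord_eq_1 by auto
next
  case False
  have cong_k: "[e ^ k = 1] (mod p ^ b)" using yek pow_eq_self_iff_cong[OF y] oy by simp
  then have "[e ^ k = 1] (mod p)" using False by (simp add: cong_dvd_modulus_nat)
  then have "coprime (e ^ k) p" using p cong_imp_coprime[of 1 "e ^ k" p]
    by (simp add: cong_sym prime_nat_iff)
  then have "coprime e p" using k by simp
  then have "[e = 1] (mod p ^ b)" using cong_1_if_pow_cong_1[OF p large _ cong_k] by blast
  then show ?thesis using pow_eq_self_iff_cong[OF y] oy by simp
qed

lemma card_powers:
  assumes fin: "finite (carrier G)" and g: "g \<in> carrier G"
  shows "card (range (\<lambda>i::nat. g [^] i)) = ord g"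
proof -
  have "range (\<lambda>i::nat. g [^] i) = generate G {g}"
    using generate_pow_on_finite_carrier[OF fin g] by auto
  then show ?thesis using generate_pow_card[OF g] by simp
qed

lemma card_roots_in_powers:
  assumes fin: "finite (carrier G)" and g: "g \<in> carrier G" and k: "k dvd ord g"
  shows "card {z \<in> range (\<lambda>i::nat. g [^] i). z [^] k = \<one>} = k"
proof -
  define s where "s = ord g div k"
  have sk: "s * k = ord g" using k by (simp add: s_def)
  have "s * k > 0" using sk ord_ge_1[OF fin g] by simp
  then have s0: "s > 0" and k0: "k > 0" by simp_all
  have "{z \<in> range (\<lambda>i::nat. g [^] i). z [^] k = \<one>} = (\<lambda>j. g [^] (s * j)) ` {..<k}"
  proof (intro equalityI subsetI)
    fix z assume "z \<in> {z \<in> range (\<lambda>i::nat. g [^] i). z [^] k = \<one>}"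
    then obtain i :: nat where i: "z = g [^] i" "g [^] (i * k) = \<one>"
      using g by (auto simp: nat_pow_pow)
    then have "s * k dvd i * k" using g sk by (simp add: pow_eq_id)
    then obtain c where c: "i = s * c" using k0 by (auto elim: dvdE)
    have "s * c = s * (k * (c div k) + c mod k)" by simp
    also have "\<dots> = ord g * (c div k) + s * (c mod k)"
      unfolding distrib_left mult.assoc[symmetric] sk ..
    finally have "z = g [^] (s * (c mod k))"
      using i c g by (simp add: nat_pow_mult[symmetric] nat_pow_pow[symmetric])
    then show "z \<in> (\<lambda>j. g [^] (s * j)) ` {..<k}" using g k0 by simp
  next
    fix z assume "z \<in> (\<lambda>j. g [^] (s * j)) ` {..<k}"
    then obtain j where j: "z = g [^] (s * j)" by blast
    have "z [^] k = (g [^] ord g) [^] j"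
      using g j sk by (simp only: nat_pow_pow) (simp add: ac_simps)
    then show "z \<in> {z \<in> range (\<lambda>i::nat. g [^] i). z [^] k = \<one>}" using g j by simp
  qed
  moreover have "inj_on (\<lambda>j. g [^] (s * j)) {..<k}"
  proof (rule inj_onI)
    fix j1 j2 assume "j1 \<in> {..<k}" "j2 \<in> {..<k}" "g [^] (s * j1) = g [^] (s * j2)"
    moreover have "s * j1 < ord g" "s * j2 < ord g"
      using \<open>j1 \<in> {..<k}\<close> \<open>j2 \<in> {..<k}\<close> s0 by (auto simp flip: sk)
    ultimately have "s * j1 = s * j2"
      using inj_onD[OF ord_inj[OF g], of "s * j1" "s * j2"] by fastforce
    then show "j1 = j2" using s0 by simp
  qed
  ultimately show ?thesis by (simp add: card_image)
qed

lemma mem_powers_if_ord_eq: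
  assumes fin: "finite (carrier G)" and g: "g \<in> carrier G"
    and u: "u \<in> range (\<lambda>i::nat. g [^] i)" and v: "v \<in> range (\<lambda>i::nat. g [^] i)"
    and uv: "ord u = ord v"
  shows "v \<in> range (\<lambda>i::nat. u [^] i)"
proof -
  obtain a :: nat where a: "u = g [^] a" using u by blast
  have uG: "u \<in> carrier G" and vG: "v \<in> carrier G" using g u v by auto
  define R where "R = {z \<in> range (\<lambda>i::nat. g [^] i). z [^] ord u = \<one>}"
  have "u [^] ord g = \<one>" using a g by (simp add: nat_pow_pow mult.commute[of a] nat_pow_pow[symmetric])
  then have "ord u dvd ord g" using uG by (simp add: pow_eq_id)
  then have "card R = ord u" unfolding R_def by (rule card_roots_in_powers[OF fin g])
  moreover have "range (\<lambda>i::nat. u [^] i) \<subseteq> R"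
  proof
    fix z assume "z \<in> range (\<lambda>i::nat. u [^] i)"
    then obtain i :: nat where i: "z = u [^] i" by blast
    then have "z = g [^] (a * i)" using a g by (simp add: nat_pow_pow)
    moreover have "z [^] ord u = \<one>"
      using i uG by (metis mult.commute nat_pow_one nat_pow_pow pow_ord_eq_1)
    ultimately show "z \<in> R" by (simp add: R_def)
  qed
  moreover have "finite R" using fin g unfolding R_def by (auto intro: finite_subset)
  ultimately have "range (\<lambda>i::nat. u [^] i) = R" using card_powers[OF fin uG] card_subset_eq by metis
  moreover have "v \<in> R" using v vG uv by (simp add: R_def)
  ultimately show ?thesis by simp
qed

lemma finite_subgroupI:
  assumes fin: "finite (carrier G)" and S: "S \<subseteq> carrier G" "\<one> \<in> S"
    and mult: "\<And>x y. x \<in> S \<Longrightarrow> y \<in> S \<Longrightarrow> x \<otimes> y \<in> S"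
  shows "subgroup S G"
proof (rule subgroupI)
  have pow: "x [^] (n::nat) \<in> S" if "x \<in> S" for x n
    using that S mult by (induction n) auto
  fix x assume x: "x \<in> S"
  then have xG: "x \<in> carrier G" using S by blast
  have "x [^] (ord x - 1) \<otimes> x = \<one>"
    using xG ord_ge_1[OF fin xG] nat_pow_Suc[of x "ord x - 1"] by simp
  then have "inv x = x [^] (ord x - 1)" using xG by (simp add: inv_equality)
  then show "inv x \<in> S" using pow[OF x] by simp
qed (use S mult in auto)

end

lemma (in group_hom) card_preimage:
  assumes fin: "finite (carrier G)" and Y: "Y \<subseteq> h ` carrier G"
  shows "card {g \<in> carrier G. h g \<in> Y} = card (kernel G H h) * card Y"
proof -
  let ?K = "kernel G H h"
  have K: "subgroup ?K G" by (rule subgroup_kernel)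
  have fiber: "{g \<in> carrier G. h g = h a} = ?K #> a" if a: "a \<in> carrier G" for a
  proof (intro equalityI subsetI)
    fix g assume "g \<in> {g \<in> carrier G. h g = h a}"
    then have g: "g \<in> carrier G" "h g = h a" by auto
    then have "g \<otimes>\<^bsub>G\<^esub> inv\<^bsub>G\<^esub> a \<in> ?K" using a by (simp add: kernel_def hom_inv)
    moreover have "g = (g \<otimes>\<^bsub>G\<^esub> inv\<^bsub>G\<^esub> a) \<otimes>\<^bsub>G\<^esub> a" using g a by (simp add: G.m_assoc)
    ultimately show "g \<in> ?K #> a" unfolding r_coset_def by blast
  next
    fix g assume "g \<in> ?K #> a"
    then obtain k where "k \<in> ?K" "g = k \<otimes>\<^bsub>G\<^esub> a" unfolding r_coset_def by blast
    then show "g \<in> {g \<in> carrier G. h g = h a}" using a by (auto simp: kernel_def)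
  qed
  have "card {g \<in> carrier G. h g = y} = card ?K" if y: "y \<in> Y" for y
  proof -
    obtain a where a: "a \<in> carrier G" "y = h a" using y Y by blast
    have "?K #> a \<in> rcosets\<^bsub>G\<^esub> ?K" using a by (auto simp: RCOSETS_def)
    then show ?thesis
      using fiber[OF a(1)] a G.card_rcosets_equal subgroup.subset[OF K] by metis
  qed
  then have "(\<Sum>y\<in>Y. card {g \<in> carrier G. h g = y}) = card Y * card ?K" by simp
  moreover have "card (\<Union>y\<in>Y. {g \<in> carrier G. h g = y}) = (\<Sum>y\<in>Y. card {g \<in> carrier G. h g = y})"
    using Y fin finite_surj by (intro card_UN_disjoint) auto
  moreover have "{g \<in> carrier G. h g \<in> Y} = (\<Union>y\<in>Y. {g \<in> carrier G. h g = y})" by blast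
  ultimately show ?thesis by simp
qed

lemma (in group_hom) subgroup_preimage:
  assumes Y: "subgroup Y H"
  shows "subgroup {g \<in> carrier G. h g \<in> Y} G"
proof (rule G.subgroupI)
  show "{g \<in> carrier G. h g \<in> Y} \<noteq> {}" using subgroup.one_closed[OF Y] by force
  show "inv g \<in> {g \<in> carrier G. h g \<in> Y}" if "g \<in> {g \<in> carrier G. h g \<in> Y}" for g
    using that subgroup.m_inv_closed[OF Y] by simp
  show "g \<otimes> g' \<in> {g \<in> carrier G. h g \<in> Y}"
    if "g \<in> {g \<in> carrier G. h g \<in> Y}" "g' \<in> {g \<in> carrier G. h g \<in> Y}" for g g'
    using that subgroup.m_closed[OF Y] by simp
qed auto

section \<open>Cosets and the transfer into an abelian subgroup\<close>

definition coset_rep :: "'a set \<Rightarrow> 'a" where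
  "coset_rep C = (SOME x. x \<in> C)"

context group begin

lemma rcosets_subset_carrier: "subgroup H G \<Longrightarrow> C \<in> rcosets H \<Longrightarrow> C \<subseteq> carrier G"
  using subgroup.rcosets_carrier is_group by blast

lemma rcoset_mult_closed:
  assumes "subgroup H G" "C \<in> rcosets H" "x \<in> carrier G"
  shows "C #> x \<in> rcosets H"
proof -
  obtain a where a: "a \<in> carrier G" "C = H #> a" using assms(2) by (auto simp: RCOSETS_def)
  then have "C #> x = H #> (a \<otimes> x)"
    using assms by (simp add: coset_mult_assoc subgroup.subset)
  then show ?thesis using a assms(3) by (auto simp: RCOSETS_def)
qed

lemma funpow_rcoset_mult:
  assumes H: "subgroup H G" and C: "C \<in> rcosets H" and x: "x \<in> carrier G"
  shows "((\<lambda>D. D #> x) ^^ n) C = C #> x [^] n"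
proof (induction n)
  case 0
  show ?case using rcosets_subset_carrier[OF H C] by simp
next
  case (Suc n)
  then show ?case using rcosets_subset_carrier[OF H C] x by (simp add: coset_mult_assoc)
qed

lemma funpow_rcoset_mult_ord:
  assumes "subgroup H G" "C \<in> rcosets H" "x \<in> carrier G"
  shows "((\<lambda>D. D #> x) ^^ ord x) C = C"
  using assms rcosets_subset_carrier[OF assms(1,2)] by (simp add: funpow_rcoset_mult)

lemma rcoset_mult_inj:
  assumes "subgroup H G" "x \<in> carrier G"
  shows "inj_on (\<lambda>C. C #> x) (rcosets H)"
proof (rule inj_onI)
  fix C D assume "C \<in> rcosets H" "D \<in> rcosets H" "C #> x = D #> x"
  then have "C #> x #> inv x = D #> x #> inv x" by simp
  then show "C = D"
    using assms \<open>C \<in> rcosets H\<close> \<open>D \<in> rcosets H\<close> rcosets_subset_carrier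
    by (simp add: coset_mult_assoc)
qed

lemma rcoset_mult_image:
  assumes "subgroup H G" "x \<in> carrier G"
  shows "(\<lambda>C. C #> x) ` (rcosets H) = rcosets H"
proof
  show "(\<lambda>C. C #> x) ` (rcosets H) \<subseteq> rcosets H" using rcoset_mult_closed assms by blast
  show "rcosets H \<subseteq> (\<lambda>C. C #> x) ` (rcosets H)"
  proof
    fix D assume D: "D \<in> rcosets H"
    then have "D = (D #> inv x) #> x"
      using assms rcosets_subset_carrier by (simp add: coset_mult_assoc)
    then show "D \<in> (\<lambda>C. C #> x) ` (rcosets H)" using rcoset_mult_closed assms D by blast
  qed
qed

lemma conj_in_subgroup_if_fixes_rcoset:
  assumes "subgroup P G" "s \<in> carrier G" "z \<in> carrier G" "P #> s #> z = P #> s"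
  shows "s \<otimes> z \<otimes> inv s \<in> P"
proof -
  have "s \<otimes> z \<in> P #> s"
    using assms rcos_self[OF _ assms(1)] coset_mult_assoc subgroup.subset by (metis m_closed)
  then obtain h where "h \<in> P" "s \<otimes> z = h \<otimes> s" by (auto simp: r_coset_def)
  then show ?thesis using assms(1-3) subgroup.mem_carrier[OF assms(1)] by (simp add: m_assoc)
qed

text \<open>
  \<open>y\<close> and \<open>w\<close> generate a \<open>p\<close>-group acting on the right cosets of \<open>P\<close>; as the number of cosets
  is prime to \<open>p\<close>, counting fixed points modulo \<open>p\<close> twice yields a common fixed coset.
\<close>

lemma common_fixed_rcoset:
  assumes fin: "finite (carrier G)" and p: "Factorial_Ring.prime p"
    and subP: "subgroup P G" and idx: "coprime (card (rcosets P)) p"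
    and y: "y \<in> carrier G" "y [^] (p ^ a) = \<one>"
    and w: "w \<in> carrier G" "w [^] (p ^ c) = \<one>" "w \<otimes> y \<otimes> inv w = y [^] (f::nat)"
  obtains s where "s \<in> carrier G" "P #> s #> y = P #> s" "P #> s #> w = P #> s"
proof -
  have rcosets_fin: "finite (rcosets P)"
    using rcosets_subset_PowG[OF subP] fin by (meson finite_Pow_iff finite_subset)
  have pow_coset: "((\<lambda>D. D #> g) ^^ n) D = D #> g [^] n" if "D \<in> rcosets P" "g \<in> carrier G" for D g n
    using funpow_rcoset_mult[OF subP that] .
  define F where "F = {D \<in> rcosets P. D #> y = D}"
  have "[card (rcosets P) = card F] (mod p)"
    unfolding F_def using card_fixpoints_cong[OF rcosets_fin _ p, of "\<lambda>D. D #> y" a]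
      rcoset_mult_image[OF subP y(1)] pow_coset[OF _ y(1)] y(2) rcosets_subset_carrier[OF subP] by simp
  moreover have "[card F = card {D \<in> F. D #> w = D}] (mod p)"
  proof (rule card_fixpoints_cong[OF _ _ p])
    show "finite F" using rcosets_fin by (simp add: F_def)
    have "D #> w #> y = D #> w" if D: "D \<in> F" for D
    proof -
      have "w \<otimes> y = y [^] f \<otimes> w" using w y inv_solve_right' by simp
      then have "D #> w #> y = D #> y [^] f #> w"
        using D w y rcosets_subset_carrier[OF subP] by (simp add: F_def coset_mult_assoc)
      also have "((\<lambda>D. D #> y) ^^ f) D = D" using D by (induction f) (simp_all add: F_def)
      then have "D #> y [^] f = D" using D pow_coset[OF _ y(1)] by (simp add: F_def)
      finally show ?thesis .
    qed
    then show "(\<lambda>D. D #> w) ` F \<subseteq> F" using rcoset_mult_closed[OF subP _ w(1)] by (auto simp: F_def)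
    show "((\<lambda>D. D #> w) ^^ p ^ c) D = D" if "D \<in> F" for D
      using that w pow_coset rcosets_subset_carrier[OF subP] by (simp add: F_def)
  qed
  ultimately have "{D \<in> F. D #> w = D} \<noteq> {}"
  proof (intro notI)
    assume "[card (rcosets P) = card F] (mod p)" "[card F = card {D \<in> F. D #> w = D}] (mod p)"
      and "{D \<in> F. D #> w = D} = {}"
    then have "p dvd card (rcosets P)" by (metis card.empty cong_0_iff cong_trans)
    then show False using idx p coprime_absorb_left[of p] by (simp add: coprime_commute)
  qed
  then show thesis using that by (auto simp: F_def RCOSETS_def)
qed

lemma commute_if_conj_pow_coprime_index:
  assumes fin: "finite (carrier G)" and p: "Factorial_Ring.prime p"
    and subP: "subgroup P G" and comm: "\<And>a b. a \<in> P \<Longrightarrow> b \<in> P \<Longrightarrow> a \<otimes> b = b \<otimes> a"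
    and idx: "coprime (card (rcosets P)) p"
    and y: "y \<in> P" "y [^] (p ^ a) = \<one>"
    and w: "w \<in> carrier G" "w [^] (p ^ c) = \<one>" "w \<otimes> y \<otimes> inv w = y [^] (f::nat)"
  shows "y \<otimes> w = w \<otimes> y"
proof -
  have yG: "y \<in> carrier G" using y subgroup.mem_carrier[OF subP] by blast
  obtain s where s: "s \<in> carrier G" "P #> s #> y = P #> s" "P #> s #> w = P #> s"
    using common_fixed_rcoset[OF fin p subP idx yG y(2) w] .
  have "(s \<otimes> y \<otimes> inv s) \<otimes> (s \<otimes> w \<otimes> inv s) = (s \<otimes> w \<otimes> inv s) \<otimes> (s \<otimes> y \<otimes> inv s)"
    using comm conj_in_subgroup_if_fixes_rcoset[OF subP s(1)] s yG w(1) by blast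
  then have "s \<otimes> (y \<otimes> w) \<otimes> inv s = s \<otimes> (w \<otimes> y) \<otimes> inv s"
    using s yG w(1) by (simp add: m_assoc)
  then show ?thesis using s yG w(1) by (metis m_closed inv_closed r_cancel l_cancel)
qed

lemma coset_rep:
  assumes "subgroup H G" "C \<in> rcosets H"
  shows "coset_rep C \<in> carrier G" and "C = H #> coset_rep C"
proof -
  obtain a where a: "a \<in> carrier G" "C = H #> a" using assms(2) by (auto simp: RCOSETS_def)
  then have "a \<in> C" using assms(1) by (simp add: rcos_self)
  then have r: "coset_rep C \<in> C" unfolding coset_rep_def by (rule someI)
  then show "coset_rep C \<in> carrier G" using rcosets_subset_carrier[OF assms] by blast
  show "C = H #> coset_rep C" using a r assms(1) repr_independence by blast
qed

definition transfer_factor :: "'a set \<Rightarrow> 'a \<Rightarrow> 'a set \<Rightarrow> 'a" where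
  "transfer_factor H g C = coset_rep C \<otimes> g \<otimes> inv (coset_rep (C #> g))"

definition transfer_map :: "'a set \<Rightarrow> 'a \<Rightarrow> 'a" where
  "transfer_map H g = finprod (G\<lparr>carrier := H\<rparr>) (transfer_factor H g) (rcosets H)"

lemma transfer_factor_in:
  assumes H: "subgroup H G" and C: "C \<in> rcosets H" and g: "g \<in> carrier G"
  shows "transfer_factor H g C \<in> H"
proof -
  have Cg: "C #> g \<in> rcosets H" using rcoset_mult_closed assms by blast
  have "coset_rep C \<otimes> g \<in> C #> g"
    using coset_rep[OF H C] H g by (metis rcos_self rcosI coset_mult_assoc subgroup.subset m_closed)
  then obtain h where "h \<in> H" "coset_rep C \<otimes> g = h \<otimes> coset_rep (C #> g)"
    using coset_rep(2)[OF H Cg] by (auto simp: r_coset_def)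
  then show ?thesis
    using coset_rep(1)[OF H Cg] subgroup.mem_carrier[OF H] by (simp add: transfer_factor_def m_assoc)
qed

context
  fixes P
  assumes fin: "finite (carrier G)" and subP: "subgroup P G"
    and comm: "\<And>a b. a \<in> P \<Longrightarrow> b \<in> P \<Longrightarrow> a \<otimes> b = b \<otimes> a"
begin

lemma comm_group_subgroup: "comm_group (G\<lparr>carrier := P\<rparr>)"
  using subgroup.subgroup_is_group[OF subP is_group] comm by (intro group.group_comm_groupI) auto

interpretation P: comm_group "G\<lparr>carrier := P\<rparr>"
  by (rule comm_group_subgroup)

lemma finite_rcosets: "finite (rcosets P)"
  using rcosets_subset_PowG[OF subP] fin by (meson finite_Pow_iff finite_subset)

lemma transfer_map_closed:
  assumes "g \<in> carrier G"
  shows "transfer_map P g \<in> P"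
proof -
  have "transfer_factor P g \<in> rcosets P \<rightarrow> P" using transfer_factor_in[OF subP _ assms] by blast
  then show ?thesis unfolding transfer_map_def using P.finprod_closed by simp
qed

lemma transfer_map_mult:
  assumes g: "g \<in> carrier G" and h: "h \<in> carrier G"
  shows "transfer_map P (g \<otimes> h) = transfer_map P g \<otimes> transfer_map P h"
proof -
  have factor_in: "\<And>k C. k \<in> carrier G \<Longrightarrow> C \<in> rcosets P \<Longrightarrow> transfer_factor P k C \<in> P"
    using transfer_factor_in[OF subP] by blast
  have split: "transfer_factor P (g \<otimes> h) C = transfer_factor P g C \<otimes> transfer_factor P h (C #> g)"
    if C: "C \<in> rcosets P" for C
  proof -
    have Cg: "C #> g \<in> rcosets P" using rcoset_mult_closed[OF subP C g] .
    have "C #> g #> h = C #> (g \<otimes> h)"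
      using rcosets_subset_carrier[OF subP C] g h by (simp add: coset_mult_assoc)
    moreover have "coset_rep C \<in> carrier G" "coset_rep (C #> g) \<in> carrier G"
      "coset_rep (C #> (g \<otimes> h)) \<in> carrier G"
      using coset_rep(1)[OF subP] C Cg rcoset_mult_closed[OF subP C] g h by simp_all
    ultimately show ?thesis unfolding transfer_factor_def using g h by (simp add: m_assoc)
  qed
  have "transfer_map P (g \<otimes> h)
      = finprod (G\<lparr>carrier := P\<rparr>) (\<lambda>C. transfer_factor P g C \<otimes> transfer_factor P h (C #> g)) (rcosets P)"
    unfolding transfer_map_def
    using split factor_in g h rcoset_mult_closed[OF subP] subgroup.m_closed[OF subP]
    by (intro P.finprod_cong') auto
  also have "\<dots> = transfer_map P g \<otimes> finprod (G\<lparr>carrier := P\<rparr>) (\<lambda>C. transfer_factor P h (C #> g)) (rcosets P)"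
  proof -
    have "transfer_factor P g \<in> rcosets P \<rightarrow> P" "(\<lambda>C. transfer_factor P h (C #> g)) \<in> rcosets P \<rightarrow> P"
      using factor_in g h rcoset_mult_closed[OF subP] by auto
    then show ?thesis unfolding transfer_map_def using P.finprod_multf by simp
  qed
  also have "finprod (G\<lparr>carrier := P\<rparr>) (\<lambda>C. transfer_factor P h (C #> g)) (rcosets P) = transfer_map P h"
    unfolding transfer_map_def
    using P.finprod_reindex[of "transfer_factor P h", OF _ rcoset_mult_inj[OF subP g]]
      rcoset_mult_image[OF subP g] factor_in h
    by (auto simp: Pi_def)
  finally show ?thesis .
qed

lemma transfer_factor_telescope:
  assumes C: "C \<in> rcosets P" and x: "x \<in> carrier G"
  shows "finprod (G\<lparr>carrier := P\<rparr>) (\<lambda>i. transfer_factor P x (C #> x [^] i)) {..<(j::nat)}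
     = coset_rep C \<otimes> x [^] j \<otimes> inv (coset_rep (C #> x [^] j))"
proof (induction j)
  case 0
  show ?case using coset_rep(1)[OF subP C] rcosets_subset_carrier[OF subP C] by simp
next
  case (Suc j)
  let ?t = "\<lambda>i::nat. transfer_factor P x (C #> x [^] i)"
  have Cj: "C #> x [^] i \<in> rcosets P" for i :: nat using rcoset_mult_closed[OF subP C] x by simp
  have t_in: "?t i \<in> P" for i by (rule transfer_factor_in[OF subP Cj x])
  have rep: "coset_rep (C #> x [^] i) \<in> carrier G" for i :: nat using coset_rep(1)[OF subP Cj] .
  have "finprod (G\<lparr>carrier := P\<rparr>) ?t {..<Suc j} = finprod (G\<lparr>carrier := P\<rparr>) ?t {..<j} \<otimes> ?t j"
    using t_in comm[OF t_in] P.finprod_closed[of ?t "{..<j}"] by (simp add: lessThan_Suc Pi_def)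
  also have "\<dots> = coset_rep C \<otimes> x [^] j \<otimes> inv (coset_rep (C #> x [^] j)) \<otimes>
      (coset_rep (C #> x [^] j) \<otimes> x \<otimes> inv (coset_rep (C #> x [^] j #> x)))"
    using Suc.IH by (simp add: transfer_factor_def)
  also have "C #> x [^] j #> x = C #> x [^] Suc j"
    using rcosets_subset_carrier[OF subP C] x by (simp add: coset_mult_assoc)
  finally show ?case using coset_rep(1)[OF subP C] rep[of j] rep[of "Suc j"] x by (simp add: m_assoc)
qed

lemma transfer_factor_prod_orbit:
  assumes fusion: "\<And>t y. t \<in> carrier G \<Longrightarrow> y \<in> P \<Longrightarrow> t \<otimes> y \<otimes> inv t \<in> P \<Longrightarrow> t \<otimes> y \<otimes> inv t = y"
    and xP: "x \<in> P" and C: "C \<in> rcosets P"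
  shows "finprod (G\<lparr>carrier := P\<rparr>) (transfer_factor P x) (orbit (\<lambda>D. D #> x) C)
    = x [^] card (orbit (\<lambda>D. D #> x) C)"
proof -
  let ?f = "\<lambda>D. D #> x"
  let ?t = "\<lambda>i::nat. transfer_factor P x (C #> x [^] i)"
  have x: "x \<in> carrier G" using xP subgroup.mem_carrier[OF subP] by blast
  have C_orbit: "C \<in> orbit ?f C"
    using self_in_orbit[OF funpow_rcoset_mult_ord[OF subP C x]] ord_ge_1[OF fin x] by simp
  define d where "d = funpow_dist1 ?f C C"
  have pow_C: "(?f ^^ i) C = C #> x [^] i" for i using funpow_rcoset_mult[OF subP C x] .
  have orbit_C: "orbit ?f C = (\<lambda>i. C #> x [^] i) ` {..<d}"
    using orbit_conv_funpow_dist1[OF C_orbit] by (simp add: pow_C d_def atLeast0LessThan)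
  have inj: "inj_on (\<lambda>i. C #> x [^] i) {..<d}"
    using inj_on_funpow_dist1[OF C_orbit] by (simp add: pow_C d_def atLeast0LessThan)
  have "(?f ^^ d) C = C" unfolding d_def by (rule funpow_dist1_prop[OF C_orbit])
  then have "C #> x [^] d = C" by (simp only: pow_C)
  then have telescope: "finprod (G\<lparr>carrier := P\<rparr>) ?t {..<d} = coset_rep C \<otimes> x [^] d \<otimes> inv (coset_rep C)"
    using transfer_factor_telescope[OF C x, of d] by simp
  have factors_in: "?t \<in> {..<d} \<rightarrow> carrier (G\<lparr>carrier := P\<rparr>)"
    using transfer_factor_in[OF subP] rcoset_mult_closed[OF subP C] x by simp
  then have "finprod (G\<lparr>carrier := P\<rparr>) (transfer_factor P x) (orbit ?f C) = finprod (G\<lparr>carrier := P\<rparr>) ?t {..<d}"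
    unfolding orbit_C using P.finprod_reindex[OF _ inj] by auto
  also have "\<dots> = x [^] d"
  proof -
    have "coset_rep C \<otimes> x [^] d \<otimes> inv (coset_rep C) \<in> P"
      using P.finprod_closed[OF factors_in] telescope by simp
    moreover have "x [^] d \<in> P"
      using subgroup_int_pow_closed[OF subP xP, of "int d"] by (simp add: int_pow_int)
    ultimately show ?thesis using fusion coset_rep(1)[OF subP C] telescope by simp
  qed
  finally show ?thesis using card_image[OF inj] orbit_C by simp
qed

lemma transfer_map_eq_pow_index:
  assumes fusion: "\<And>t y. t \<in> carrier G \<Longrightarrow> y \<in> P \<Longrightarrow> t \<otimes> y \<otimes> inv t \<in> P \<Longrightarrow> t \<otimes> y \<otimes> inv t = y"
    and xP: "x \<in> P"
  shows "transfer_map P x = x [^] card (rcosets P)"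
proof -
  let ?f = "\<lambda>C. C #> x"
  let ?V = "finprod (G\<lparr>carrier := P\<rparr>) (transfer_factor P x)"
  have x: "x \<in> carrier G" using xP subgroup.mem_carrier[OF subP] by blast
  have ord_pos: "0 < ord x" using ord_ge_1[OF fin x] by simp
  have "rcosets P \<subseteq> rcosets P \<longrightarrow> ?V (rcosets P) = x [^] card (rcosets P)"
  proof (rule orbit_induct[OF finite_rcosets _ ord_pos funpow_rcoset_mult_ord[OF subP _ x],
        where Q = "\<lambda>S. S \<subseteq> rcosets P \<longrightarrow> ?V S = x [^] card S"])
    show "?f ` (rcosets P) \<subseteq> rcosets P" using rcoset_mult_image[OF subP x] by simp
  next
    fix S C
    assume fin_S: "finite S" and inv: "?f ` S \<subseteq> S" and C: "C \<in> S"
      and IH: "S - orbit ?f C \<subseteq> rcosets P \<longrightarrow> ?V (S - orbit ?f C) = x [^] card (S - orbit ?f C)"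
    show "S \<subseteq> rcosets P \<longrightarrow> ?V S = x [^] card S"
    proof
      assume S: "S \<subseteq> rcosets P"
      have sub: "orbit ?f C \<subseteq> S" by (rule orbit_subset_invariant[OF inv C])
      have "?V S = ?V (orbit ?f C) \<otimes> ?V (S - orbit ?f C)"
        using P.finprod_Un_disjoint[of "orbit ?f C" "S - orbit ?f C" "transfer_factor P x"]
          sub fin_S S transfer_factor_in[OF subP _ x] by (auto simp: Pi_def Un_absorb1 finite_subset)
      also have "\<dots> = x [^] (card (orbit ?f C) + card (S - orbit ?f C))"
        using transfer_factor_prod_orbit[OF fusion xP] C IH S x
        by (auto simp: nat_pow_mult Diff_subset[THEN subset_trans])
      also have "card (orbit ?f C) + card (S - orbit ?f C) = card S"
        using sub fin_S by (metis card_Diff_subset card_mono finite_subset le_add_diff_inverse)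
      finally show "?V S = x [^] card S" .
    qed
  qed auto
  then show ?thesis by (simp add: transfer_map_def)
qed

end

end

section \<open>Z-groups\<close>

definition Z_group :: "('a, 'b) monoid_scheme \<Rightarrow> bool" where
  "Z_group G \<longleftrightarrow> group G \<and> finite (carrier G) \<and>
     (\<forall>p P. sylow_subgroup G p P \<longrightarrow> (\<exists>\<gamma>\<in>carrier G. P = range (\<lambda>i::nat. \<gamma> [^]\<^bsub>G\<^esub> i)))"

definition torsion :: "('a, 'b) monoid_scheme \<Rightarrow> nat \<Rightarrow> 'a set" where
  "torsion G d = {x \<in> carrier G. x [^]\<^bsub>G\<^esub> d = \<one>\<^bsub>G\<^esub>}"

lemma Z_groupI:
  assumes G: "group G" and fin: "finite (carrier G)"
    and cyc: "\<And>p P. sylow_subgroup G p P \<Longrightarrow> cyclic_group (subgroup_generated G P)"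
  shows "Z_group G"
  unfolding Z_group_def
proof (intro conjI allI impI G fin)
  fix p P assume syl: "sylow_subgroup G p P"
  then have Q: "subgroup P G" by (simp add: sylow_subgroup_def)
  interpret H: group "G\<lparr>carrier := P\<rparr>" using subgroup.subgroup_is_group[OF Q G] .
  have gen: "subgroup_generated G P = G\<lparr>carrier := P\<rparr>"
    using subgroup.carrier_subgroup_generated_subgroup[OF Q]
    by (simp add: subgroup_generated_def carrier_subgroup_generated)
  obtain x where x: "x \<in> P" and gen_x: "subgroup_generated (G\<lparr>carrier := P\<rparr>) {x} = G\<lparr>carrier := P\<rparr>"
    using cyc[OF syl] unfolding gen cyclic_group_def by auto
  have "P = generate (G\<lparr>carrier := P\<rparr>) {x}"
    using arg_cong[OF gen_x, of carrier] x by (simp add: carrier_subgroup_generated)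
  also have "\<dots> = range (\<lambda>k::nat. x [^]\<^bsub>G\<^esub> k)"
    using H.generate_pow_on_finite_carrier[of x] fin x subgroup.subset[OF Q]
      monoid.nat_pow_consistent[OF group.is_monoid[OF G]]
    by (auto simp: finite_subset)
  finally show "\<exists>\<gamma>\<in>carrier G. P = range (\<lambda>i::nat. \<gamma> [^]\<^bsub>G\<^esub> i)"
    using x subgroup.mem_carrier[OF Q] by blast
qed

lemma (in group) Z_group_Hall_subgroup:
  assumes Z: "Z_group G" and K: "subgroup K G" and Hall: "coprime (card K) (card (rcosets K))"
  shows "Z_group (G\<lparr>carrier := K\<rparr>)"
proof -
  have fin: "finite (carrier G)" using Z by (simp add: Z_group_def)
  have finK: "finite K" using fin subgroup.subset[OF K] finite_subset by blast
  have order_G: "order G = card K * card (rcosets K)" using lagrange[OF K] by (simp add: mult.commute)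
  have nonzero: "card K \<noteq> 0" "card (rcosets K) \<noteq> 0"
    using order_G fin order_gt_0_iff_finite by (metis mult_eq_0_iff not_gr0)+
  have "\<exists>\<gamma>\<in>K. Q = range (\<lambda>i::nat. \<gamma> [^] i)" if syl: "sylow_subgroup (G\<lparr>carrier := K\<rparr>) q Q" for q Q
  proof -
    have q: "Factorial_Ring.prime q" and QK: "subgroup Q (G\<lparr>carrier := K\<rparr>)"
      and card_Q: "card Q = q ^ multiplicity q (card K)"
      using syl by (simp_all add: sylow_subgroup_def order_def)
    have QG: "subgroup Q G" using incl_subgroup[OF K QK] .
    show ?thesis
    proof (cases "q dvd card K")
      case True
      then have "\<not> q dvd card (rcosets K)"
        using Hall q by (metis coprime_common_divisor not_prime_unit)
      then have "multiplicity q (order G) = multiplicity q (card K)"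
        using q nonzero order_G by (simp add: prime_elem_multiplicity_mult_distrib not_dvd_imp_multiplicity_0)
      then have "sylow_subgroup G q Q" using q QG card_Q by (simp add: sylow_subgroup_def)
      then have "\<exists>\<gamma>\<in>carrier G. Q = range (\<lambda>i::nat. \<gamma> [^] i)" using Z by (simp add: Z_group_def)
      then obtain \<gamma> where "\<gamma> \<in> carrier G" "Q = range (\<lambda>i::nat. \<gamma> [^] i)" by blast
      moreover have "\<gamma> [^] (1::nat) \<in> Q" using calculation by blast
      ultimately show ?thesis using subgroup.subset[OF QK] by auto
    next
      case False
      then have "card Q = 1" using card_Q by (simp add: not_dvd_imp_multiplicity_0)
      then have "Q = {\<one>}" using subgroup.one_closed[OF QG] by (metis card_1_singletonE singletonD)
      moreover have "range (\<lambda>i::nat. \<one> [^] i) = {\<one>}" by auto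
      ultimately show ?thesis using subgroup.one_closed[OF K] by metis
    qed
  qed
  moreover have "(\<lambda>i::nat. \<gamma> [^]\<^bsub>G\<lparr>carrier := K\<rparr>\<^esub> i) = (\<lambda>i. \<gamma> [^] i)" for \<gamma>
    by (rule ext) (simp add: nat_pow_consistent[symmetric])
  ultimately show ?thesis
    using subgroup.subgroup_is_group[OF K is_group] finK by (simp add: Z_group_def)
qed

lemma (in group_hom) torsion_mult_eq_preimage:
  assumes exp_H: "\<And>y. y \<in> carrier H \<Longrightarrow> y [^]\<^bsub>H\<^esub> e = \<one>\<^bsub>H\<^esub>"
    and exp_K: "\<And>x. x \<in> kernel G H h \<Longrightarrow> x [^] m = \<one>" and cop: "coprime m e"
  shows "torsion G (m * k) = {g \<in> carrier G. h g \<in> torsion H k}"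
proof (intro equalityI subsetI)
  fix g assume "g \<in> torsion G (m * k)"
  then have g: "g \<in> carrier G" "(g [^] k) [^] m = \<one>" by (simp_all add: torsion_def G.nat_pow_pow mult.commute)
  have "(h g [^]\<^bsub>H\<^esub> k) [^]\<^bsub>H\<^esub> m = \<one>\<^bsub>H\<^esub>" using g by (simp flip: hom_nat_pow)
  then have "h g [^]\<^bsub>H\<^esub> k = \<one>\<^bsub>H\<^esub>"
    using H.eq_one_if_coprime_pow_eq_one[OF _ _ exp_H cop] g by simp
  then show "g \<in> {g \<in> carrier G. h g \<in> torsion H k}" using g by (simp add: torsion_def)
next
  fix g assume "g \<in> {g \<in> carrier G. h g \<in> torsion H k}"
  then have g: "g \<in> carrier G" "h (g [^] k) = \<one>\<^bsub>H\<^esub>" by (simp_all add: torsion_def hom_nat_pow)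
  then have "(g [^] k) [^] m = \<one>" using exp_K by (simp add: kernel_def)
  then show "g \<in> torsion G (m * k)" using g by (simp add: torsion_def G.nat_pow_pow mult.commute)
qed

lemma (in group_hom) torsion_subset_kernel:
  assumes exp_H: "\<And>y. y \<in> carrier H \<Longrightarrow> y [^]\<^bsub>H\<^esub> e = \<one>\<^bsub>H\<^esub>" and cop: "coprime d e"
  shows "torsion G d \<subseteq> kernel G H h"
proof
  fix g assume "g \<in> torsion G d"
  then have g: "g \<in> carrier G" "h g [^]\<^bsub>H\<^esub> d = \<one>\<^bsub>H\<^esub>" by (simp_all add: torsion_def flip: hom_nat_pow)
  then have "h g = \<one>\<^bsub>H\<^esub>" using H.eq_one_if_coprime_pow_eq_one[OF _ _ exp_H cop] by simp
  then show "g \<in> kernel G H h" using g by (simp add: kernel_def)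
qed

lemma (in comm_group) subgroup_torsion: "subgroup (torsion G k) G"
  by (rule subgroupI) (auto simp: torsion_def nat_pow_distrib nat_pow_inv)

lemma (in group) torsion_subgroup_eq:
  assumes "subgroup K G" "torsion G d \<subseteq> K"
  shows "torsion (G\<lparr>carrier := K\<rparr>) d = torsion G d"
  using assms subgroup.mem_carrier[OF assms(1)]
  by (auto simp: torsion_def nat_pow_consistent[symmetric])

lemma (in group) normal_torsion:
  assumes "subgroup (torsion G d) G"
  shows "torsion G d \<lhd> G"
proof -
  have "x \<otimes> h \<otimes> inv x \<in> torsion G d" if "x \<in> carrier G" "h \<in> torsion G d" for x h
    using that by (simp add: torsion_def conj_nat_pow)
  then show ?thesis using assms normal_inv_iff by blast
qed

locale cyclic_sylow_of_smallest_prime = group +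
  fixes p a m :: nat and P :: "'a set" and \<gamma> :: 'a
  assumes finite_carrier: "finite (carrier G)"
    and prime: "Factorial_Ring.prime p"
    and smallest: "\<And>q. Factorial_Ring.prime q \<Longrightarrow> q dvd order G \<Longrightarrow> p \<le> q"
    and order_eq: "order G = p ^ a * m" and not_dvd: "\<not> p dvd m"
    and sylow: "subgroup P G" and card_P: "card P = p ^ a"
    and cyclic: "P = range (\<lambda>i::nat. \<gamma> [^] i)" and generator: "\<gamma> \<in> carrier G"
begin

definition complement :: "'a set" where
  "complement = kernel G (G\<lparr>carrier := P\<rparr>) (transfer_map P)"

lemma sylow_comm: "x \<in> P \<Longrightarrow> y \<in> P \<Longrightarrow> x \<otimes> y = y \<otimes> x"
  using cyclic generator by (auto simp: nat_pow_mult add.commute)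

lemma ord_generator: "ord \<gamma> = p ^ a"
  using card_powers[OF finite_carrier generator] cyclic card_P by simp

lemma sylow_exponent:
  assumes "z \<in> P"
  shows "z [^] (p ^ a) = \<one>"
proof -
  obtain i :: nat where "z = \<gamma> [^] i" using assms cyclic by blast
  then have "z [^] (p ^ a) = (\<gamma> [^] ord \<gamma>) [^] i"
    using generator ord_generator by (simp add: nat_pow_pow mult.commute)
  then show ?thesis using generator by simp
qed

lemma index_sylow: "card (rcosets P) = m"
proof -
  have "card (rcosets P) * p ^ a = p ^ a * m" using lagrange[OF sylow] card_P order_eq by simp
  then show ?thesis using prime by (simp add: prime_gt_0_nat)
qed

lemma coprime_index: "coprime m p"
  using not_dvd prime by (metis prime_imp_coprime coprime_commute)

text \<open>
  Write \<open>t y t\<inverse> = y\<^sup>e\<close> and let \<open>k\<close> be the \<open>p'\<close>-part of the order of \<open>t\<close>. The \<open>p\<close>-element \<open>t\<^sup>k\<close>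
  normalises \<open>\<langle>y\<rangle>\<close>, so it commutes with \<open>y\<close>, i.e. \<open>y\<^bsup>e\<^sup>k\<^esup> = y\<close>; since all prime factors of \<open>k\<close>
  exceed \<open>p\<close>, this forces \<open>e \<equiv> 1\<close> modulo the order of \<open>y\<close>.
\<close>

lemma sylow_conj_eq:
  assumes t: "t \<in> carrier G" and y: "y \<in> P" and conj: "t \<otimes> y \<otimes> inv t \<in> P"
  shows "t \<otimes> y \<otimes> inv t = y"
proof -
  have yG: "y \<in> carrier G" using y subgroup.mem_carrier[OF sylow] by blast
  have "t \<otimes> y \<otimes> inv t \<in> range (\<lambda>i::nat. y [^] i)"
    using mem_powers_if_ord_eq[OF finite_carrier generator] y conj cyclic ord_conj[OF t yG] by simp
  then obtain e :: nat where e: "t \<otimes> y \<otimes> inv t = y [^] e" by blast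
  define c where "c = multiplicity p (ord t)"
  define k where "k = ord t div p ^ c"
  have ord_t: "ord t = p ^ c * k" unfolding k_def c_def by (simp add: multiplicity_dvd)
  have "p ^ c * k > 0" using ord_t ord_ge_1[OF finite_carrier t] by linarith
  then have k: "k > 0" by simp
  have "ord t \<noteq> 0" "\<not> is_unit p" using ord_t k prime by auto
  then have pk: "\<not> p dvd k" unfolding k_def c_def by (rule multiplicity_decompose)
  have large: "p < r" if r: "Factorial_Ring.prime r" "r dvd k" for r
  proof -
    have "r dvd order G" using r ord_t ord_dvd_group_order[OF t] by (metis dvd_mult_right dvd_trans)
    then show ?thesis using smallest[OF r(1)] r pk by (cases "r = p") auto
  qed
  have "(t [^] k) [^] (p ^ c) = t [^] ord t" using t ord_t by (simp add: nat_pow_pow mult.commute)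
  then have w: "t [^] k \<in> carrier G" "(t [^] k) [^] (p ^ c) = \<one>" using t by simp_all
  have w_conj: "t [^] k \<otimes> y \<otimes> inv (t [^] k) = y [^] (e ^ k)"
    using iterated_conj_eq_pow[OF t yG e] .
  have "y \<otimes> t [^] k = t [^] k \<otimes> y"
    using commute_if_conj_pow_coprime_index[OF finite_carrier prime sylow sylow_comm _ y
        sylow_exponent[OF y] w w_conj] index_sylow coprime_index by simp
  then have "t [^] k \<otimes> y \<otimes> inv (t [^] k) = y \<otimes> t [^] k \<otimes> inv (t [^] k)" by simp
  also have "\<dots> = y" using w(1) yG by (simp add: m_assoc)
  finally have "y [^] (e ^ k) = y" using w_conj by simp
  moreover have "ord y dvd p ^ a" using sylow_exponent[OF y] pow_eq_id[OF yG] by simp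
  then obtain b where "ord y = p ^ b" using divides_primepow_nat[OF prime] by auto
  ultimately have "y [^] e = y" using pow_eq_self_if_pow_power_eq_self[OF yG prime _ large k] by blast
  then show ?thesis using e by simp
qed

lemma transfer_on_sylow: "x \<in> P \<Longrightarrow> transfer_map P x = x [^] m"
  using transfer_map_eq_pow_index[OF finite_carrier sylow sylow_comm sylow_conj_eq] index_sylow by simp

lemma transfer_hom: "group_hom G (G\<lparr>carrier := P\<rparr>) (transfer_map P)"
proof -
  have "transfer_map P \<in> hom G (G\<lparr>carrier := P\<rparr>)"
    using transfer_map_closed[OF finite_carrier sylow sylow_comm]
      transfer_map_mult[OF finite_carrier sylow sylow_comm] by (intro homI) auto
  then show ?thesis
    using subgroup.subgroup_is_group[OF sylow is_group]
    by (simp add: group_hom_def group_hom_axioms_def is_group)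
qed

lemma transfer_surj: "transfer_map P ` carrier G = P"
proof -
  have "m > 0" using order_eq finite_carrier order_gt_0_iff_finite by (metis mult_0_right not_gr0)
  moreover have "gcd m (p ^ a) = 1" using coprime_index by (simp add: coprime_iff_gcd_eq_1[symmetric])
  ultimately obtain s u where su: "m * s = p ^ a * u + 1" using bezout_nat[of m "p ^ a"] by auto
  have "z \<in> transfer_map P ` carrier G" if z: "z \<in> P" for z
  proof -
    have zG: "z \<in> carrier G" and zs: "z [^] s \<in> P"
      using subgroup.mem_carrier[OF sylow z] subgroup_int_pow_closed[OF sylow z, of "int s"]
      by (simp_all add: int_pow_int)
    have "transfer_map P (z [^] s) = z [^] (p ^ a * u + 1)"
      using transfer_on_sylow[OF zs] zG su by (simp add: nat_pow_pow mult.commute)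
    also have "\<dots> = (z [^] (p ^ a)) [^] u \<otimes> z"
      using zG by (simp add: nat_pow_mult[symmetric] nat_pow_pow)
    finally show ?thesis using zs sylow_exponent[OF z] zG subgroup.mem_carrier[OF sylow] by force
  qed
  then show ?thesis using transfer_map_closed[OF finite_carrier sylow sylow_comm] by blast
qed

lemma subgroup_complement: "subgroup complement G"
  unfolding complement_def by (rule group_hom.subgroup_kernel[OF transfer_hom])

lemma card_complement: "card complement = m"
proof -
  have "{g \<in> carrier G. transfer_map P g \<in> P} = carrier G"
    using transfer_map_closed[OF finite_carrier sylow sylow_comm] by blast
  then have "order G = card complement * p ^ a"
    using group_hom.card_preimage[OF transfer_hom finite_carrier, of P] transfer_surj card_P
    by (simp add: order_def complement_def)
  then show ?thesis using order_eq prime by (simp add: prime_gt_0_nat)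
qed

lemma complement_exponent: "x \<in> complement \<Longrightarrow> x [^] m = \<one>"
  using group.pow_order_eq_1[OF subgroup.subgroup_is_group[OF subgroup_complement is_group]]
    card_complement by (simp add: order_def nat_pow_consistent[symmetric])

lemma Z_group_complement:
  assumes "Z_group G"
  shows "Z_group (G\<lparr>carrier := complement\<rparr>)"
proof (rule Z_group_Hall_subgroup[OF assms subgroup_complement])
  have "card (rcosets complement) * m = p ^ a * m"
    using lagrange[OF subgroup_complement] card_complement order_eq by simp
  then have "card (rcosets complement) = p ^ a"
    using order_eq finite_carrier order_gt_0_iff_finite by (metis mult_0_right mult_right_cancel not_gr0)
  then show "coprime (card complement) (card (rcosets complement))"
    using coprime_index card_complement by simp
qed

lemma torsion_if_dvd:
  assumes i: "i \<le> a"
  shows "subgroup (torsion G (m * p ^ i)) G" and "card (torsion G (m * p ^ i)) = m * p ^ i"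
proof -
  interpret V: group_hom G "G\<lparr>carrier := P\<rparr>" "transfer_map P" by (rule transfer_hom)
  interpret P: comm_group "G\<lparr>carrier := P\<rparr>"
    using comm_group_subgroup[OF finite_carrier sylow sylow_comm] .
  define Y where "Y = torsion (G\<lparr>carrier := P\<rparr>) (p ^ i)"
  have preimage: "torsion G (m * p ^ i) = {g \<in> carrier G. transfer_map P g \<in> Y}"
    using V.torsion_mult_eq_preimage[of "p ^ a" m] sylow_exponent complement_exponent coprime_index
    by (simp add: Y_def complement_def nat_pow_consistent[symmetric])
  have "Y = {z \<in> range (\<lambda>k::nat. \<gamma> [^] k). z [^] (p ^ i) = \<one>}"
    using cyclic by (auto simp: Y_def torsion_def nat_pow_consistent[symmetric])
  moreover have "p ^ i dvd ord \<gamma>" using i ord_generator by (simp add: le_imp_power_dvd)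
  ultimately have "card Y = p ^ i" using card_roots_in_powers[OF finite_carrier generator] by simp
  moreover have "Y \<subseteq> transfer_map P ` carrier G" using transfer_surj by (auto simp: Y_def torsion_def)
  ultimately show "card (torsion G (m * p ^ i)) = m * p ^ i"
    using V.card_preimage[OF finite_carrier] preimage card_complement by (simp add: complement_def)
  show "subgroup (torsion G (m * p ^ i)) G"
    using preimage V.subgroup_preimage[OF P.subgroup_torsion] by (simp add: Y_def)
qed

lemma torsion_if_tower_divisor_dvd:
  assumes "tower_divisor (order G) d" and "p dvd d"
  shows "subgroup (torsion G d) G \<and> card (torsion G d) = d"
proof -
  have "m > 0" using order_eq finite_carrier order_gt_0_iff_finite by (metis mult_0_right not_gr0)
  then have "d = m * p ^ multiplicity p d" "multiplicity p d \<le> a"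
    using tower_divisor_smallest_prime[OF assms(1) order_eq prime not_dvd assms(2) _ smallest] by auto
  then show ?thesis using torsion_if_dvd by metis
qed

lemma tower_divisor_complement:
  assumes "tower_divisor (order G) d" and "\<not> p dvd d"
  shows "tower_divisor m d"
  using tower_divisor_cofactor[OF assms(1) order_eq prime not_dvd assms(2)] order_eq finite_carrier
    order_gt_0_iff_finite by (metis mult_0_right not_gr0)

lemma torsion_if_coprime:
  assumes "coprime d p"
  shows "torsion (G\<lparr>carrier := complement\<rparr>) d = torsion G d"
proof -
  have "torsion G d \<subseteq> complement"
    unfolding complement_def using assms sylow_exponent
    by (intro group_hom.torsion_subset_kernel[OF transfer_hom, of "p ^ a"])
      (simp_all add: nat_pow_consistent[symmetric])
  then show ?thesis by (rule torsion_subgroup_eq[OF subgroup_complement])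
qed

end

lemma Z_group_smallest_prime_sylow:
  assumes Z: "Z_group G" and nontrivial: "order G \<noteq> 1"
  obtains p a m P \<gamma> where "cyclic_sylow_of_smallest_prime G p a m P \<gamma>" and "m < order G"
proof -
  interpret group G using Z by (simp add: Z_group_def)
  have fin: "finite (carrier G)" using Z by (simp add: Z_group_def)
  obtain p where p: "Factorial_Ring.prime p" "p dvd order G"
    and smallest: "\<And>q. Factorial_Ring.prime q \<Longrightarrow> q dvd order G \<Longrightarrow> p \<le> q"
    using smallest_prime_factor[OF nontrivial] by blast
  define a m where "a = multiplicity p (order G)" and "m = order G div p ^ a"
  have order_G: "order G = p ^ a * m" by (simp add: a_def m_def multiplicity_dvd)
  have order_pos: "order G > 0" using fin order_gt_0_iff_finite by blast
  then have pm: "\<not> p dvd m" unfolding a_def m_def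
    using multiplicity_decompose[of "order G" p] p(1) prime_gt_1_nat by force
  have "a \<noteq> 0" using order_G p(2) pm by (cases a) auto
  then have "p ^ a > 1" using p(1) prime_gt_1_nat one_less_power by blast
  then have m_less: "m < order G" using order_G order_pos by simp
  obtain P where P: "subgroup P G" "card P = p ^ a"
    using sylow_thm[OF p(1) is_group order_G fin] by blast
  then have "sylow_subgroup G p P" using p(1) by (simp add: sylow_subgroup_def a_def)
  then have "\<exists>\<gamma>\<in>carrier G. P = range (\<lambda>i::nat. \<gamma> [^]\<^bsub>G\<^esub> i)"
    using Z by (simp add: Z_group_def)
  then obtain \<gamma> where \<gamma>: "\<gamma> \<in> carrier G" "P = range (\<lambda>i::nat. \<gamma> [^]\<^bsub>G\<^esub> i)" by blast
  have "cyclic_sylow_of_smallest_prime G p a m P \<gamma>"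
    by (intro cyclic_sylow_of_smallest_prime.intro cyclic_sylow_of_smallest_prime_axioms.intro is_group)
      (use fin p(1) smallest order_G pm P \<gamma> in auto)
  then show thesis using that m_less by blast
qed

theorem Z_group_torsion:
  assumes "Z_group G" and "tower_divisor (order G) d"
  shows "subgroup (torsion G d) G \<and> card (torsion G d) = d"
  using assms
proof (induction "order G" arbitrary: G d rule: less_induct)
  case less
  interpret group G using less.prems(1) by (simp add: Z_group_def)
  show ?case
  proof (cases "order G = 1")
    case True
    then have "carrier G = {\<one>\<^bsub>G\<^esub>}" using order_one_triv_iff by blast
    moreover have d: "d = 1" using True less.prems(2) by (simp add: tower_divisor_def)
    ultimately have "torsion G d = carrier G" by (auto simp: torsion_def)
    then show ?thesis using subgroup_self True d by (simp add: order_def)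
  next
    case False
    obtain p a m P \<gamma> where S: "cyclic_sylow_of_smallest_prime G p a m P \<gamma>" and m_less: "m < order G"
      using Z_group_smallest_prime_sylow[OF less.prems(1) False] .
    interpret S: cyclic_sylow_of_smallest_prime G p a m P \<gamma> by (rule S)
    show ?thesis
    proof (cases "p dvd d")
      case True
      then show ?thesis using S.torsion_if_tower_divisor_dvd less.prems(2) by blast
    next
      case False
      let ?K = "G\<lparr>carrier := S.complement\<rparr>"
      have "torsion ?K d = torsion G d"
        using S.torsion_if_coprime False S.prime by (metis prime_imp_coprime coprime_commute)
      moreover have "order ?K = m" using S.card_complement by (simp add: order_def)
      ultimately have "subgroup (torsion G d) ?K \<and> card (torsion G d) = d"
        using less.hyps[OF _ S.Z_group_complement[OF less.prems(1)], of d] m_less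
          S.tower_divisor_complement[OF less.prems(2) False] by simp
      then show ?thesis using incl_subgroup[OF S.subgroup_complement] by blast
    qed
  qed
qed

section \<open>Braces\<close>

lemma card_factor_cosets:
  fixes A :: "'a monoid"
  assumes A: "group A" and I: "subgroup I A" and J: "subgroup J A" and IJ: "I \<subseteq> J"
  shows "card (factor_cosets A I J) * card I = card J"
proof -
  interpret J: group "A\<lparr>carrier := J\<rparr>" using subgroup.subgroup_is_group[OF J A] .
  have "rcosets\<^bsub>A\<lparr>carrier := J\<rparr>\<^esub> I = factor_cosets A I J"
    by (auto simp: factor_cosets_def RCOSETS_def r_coset_def)
  then show ?thesis using J.lagrange[OF group.subgroup_incl[OF A I J IJ]] by (simp add: order_def)
qed

definition prime_factor_ideal_series :: "'a monoid \<Rightarrow> 'a monoid \<Rightarrow> (nat \<Rightarrow> 'a set) \<Rightarrow> nat \<Rightarrow> bool" where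
  "prime_factor_ideal_series A M I k \<longleftrightarrow> I 0 = {\<one>\<^bsub>A\<^esub>} \<and> (\<forall>i\<le>k. brace_ideal A M (I i)) \<and>
     (\<forall>i<k. I i \<subseteq> I (Suc i) \<and> Factorial_Ring.prime (card (factor_cosets A (I i) (I (Suc i)))))"

lemma prime_factor_ideal_series_snoc:
  assumes "prime_factor_ideal_series A M I k" and "brace_ideal A M J" and "I k \<subseteq> J"
    and "Factorial_Ring.prime (card (factor_cosets A (I k) J))"
  shows "prime_factor_ideal_series A M (I(Suc k := J)) (Suc k)"
  using assms by (auto simp: prime_factor_ideal_series_def le_Suc_eq less_Suc_eq)

lemma brace_supersoluble_if_prime_factor_ideal_series:
  assumes "prime_factor_ideal_series A M I k" and "I k = carrier A"
  shows "brace_supersoluble A M"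
  using assms unfolding brace_supersoluble_def prime_factor_ideal_series_def
  by (intro exI[of _ I] exI[of _ k]) (auto simp: Let_def)

context
  fixes A M :: "'a monoid"
  assumes brace: "brace A M"
begin

interpretation A: group A using brace by (simp add: brace_def)

interpretation M: group M using brace by (simp add: brace_def)

lemma brace_carrier_eq: "carrier M = carrier A"
  using brace by (simp add: brace_def)

lemma brace_one_eq: "\<one>\<^bsub>M\<^esub> = \<one>\<^bsub>A\<^esub>"
  using brace by (simp add: brace_def)

lemma brace_distrib:
  "a \<in> carrier A \<Longrightarrow> b \<in> carrier A \<Longrightarrow> c \<in> carrier A \<Longrightarrow>
    a \<otimes>\<^bsub>M\<^esub> (b \<otimes>\<^bsub>A\<^esub> c) = (a \<otimes>\<^bsub>M\<^esub> b) \<otimes>\<^bsub>A\<^esub> inv\<^bsub>A\<^esub> a \<otimes>\<^bsub>A\<^esub> (a \<otimes>\<^bsub>M\<^esub> c)"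
  using brace unfolding brace_def by blast

lemma brace_mult_closed: "a \<in> carrier A \<Longrightarrow> b \<in> carrier A \<Longrightarrow> a \<otimes>\<^bsub>M\<^esub> b \<in> carrier A"
  using M.m_closed brace_carrier_eq by metis

lemma brace_mult_eq_lambda: "a \<in> carrier A \<Longrightarrow> b \<in> carrier A \<Longrightarrow> a \<otimes>\<^bsub>M\<^esub> b = a \<otimes>\<^bsub>A\<^esub> brace_lambda A M a b"
  unfolding brace_lambda_def using brace_mult_closed by (simp add: A.m_assoc[symmetric])

lemma brace_lambda_hom:
  assumes a: "a \<in> carrier A"
  shows "group_hom A A (brace_lambda A M a)"
proof -
  have "brace_lambda A M a (b \<otimes>\<^bsub>A\<^esub> c) = brace_lambda A M a b \<otimes>\<^bsub>A\<^esub> brace_lambda A M a c"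
    if "b \<in> carrier A" "c \<in> carrier A" for b c
    using a that brace_mult_closed by (simp add: brace_distrib brace_lambda_def A.m_assoc)
  then have "brace_lambda A M a \<in> hom A A"
    using a brace_mult_closed by (intro homI) (simp_all add: brace_lambda_def)
  then show ?thesis by (simp add: group_hom_def group_hom_axioms_def A.is_group)
qed

lemma torsion_brace_ideal:
  assumes fin: "finite (carrier A)" and ZA: "Z_group A" and ZM: "Z_group M"
    and d: "tower_divisor (order A) d"
  shows "brace_ideal A M (torsion A d)" and "card (torsion A d) = d"
proof -
  let ?D = "torsion A d"
  have DA: "subgroup ?D A" and card_D: "card ?D = d" using Z_group_torsion[OF ZA d] by auto
  have "order M = order A" by (simp add: order_def brace_carrier_eq)
  then have DM': "subgroup (torsion M d) M" and card_DM: "card (torsion M d) = d"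
    using Z_group_torsion[OF ZM] d by auto
  have lambda_D: "brace_lambda A M b x \<in> ?D" if "b \<in> carrier A" "x \<in> ?D" for b x
    using that group_hom.hom_nat_pow[OF brace_lambda_hom[OF that(1)], of x d, symmetric]
      group_hom.hom_closed[OF brace_lambda_hom[OF that(1)]] group_hom.hom_one[OF brace_lambda_hom[OF that(1)]]
    by (simp add: torsion_def)
  have DM: "subgroup ?D M"
  proof (rule M.finite_subgroupI)
    show "finite (carrier M)" using fin brace_carrier_eq by simp
    show "?D \<subseteq> carrier M" "\<one>\<^bsub>M\<^esub> \<in> ?D" using subgroup.subset[OF DA] brace_carrier_eq brace_one_eq
      subgroup.one_closed[OF DA] by auto
    show "x \<otimes>\<^bsub>M\<^esub> y \<in> ?D" if xy: "x \<in> ?D" "y \<in> ?D" for x y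
    proof -
      have "x \<in> carrier A" "y \<in> carrier A" using xy subgroup.subset[OF DA] by auto
      then show ?thesis
        using brace_mult_eq_lambda lambda_D xy subgroup.m_closed[OF DA] by simp
    qed
  qed
  have "?D \<subseteq> torsion M d"
  proof
    fix x assume x: "x \<in> ?D"
    interpret D: group "M\<lparr>carrier := ?D\<rparr>" using subgroup.subgroup_is_group[OF DM M.is_group] .
    have "x [^]\<^bsub>M\<^esub> d = \<one>\<^bsub>M\<^esub>"
      using D.pow_order_eq_1[of x] x card_D by (simp add: order_def M.nat_pow_consistent[symmetric])
    then show "x \<in> torsion M d" using x subgroup.subset[OF DA] brace_carrier_eq by (auto simp: torsion_def)
  qed
  moreover have "finite (torsion M d)" using fin brace_carrier_eq by (simp add: torsion_def)
  ultimately have "?D = torsion M d" using card_subset_eq card_D card_DM by metis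
  then have "?D \<lhd> M" using M.normal_torsion[OF DM'] by simp
  moreover have "\<forall>b\<in>carrier A. brace_lambda A M b ` ?D \<subseteq> ?D" using lambda_D by blast
  ultimately show "brace_ideal A M ?D"
    using DA DM A.normal_torsion[OF DA] by (simp add: brace_ideal_def)
  show "card ?D = d" by (rule card_D)
qed

lemma torsion_ideal_series:
  assumes fin: "finite (carrier A)" and ZA: "Z_group A" and ZM: "Z_group M"
  shows "tower_divisor (order A) d \<Longrightarrow> \<exists>I k. prime_factor_ideal_series A M I k \<and> I k = torsion A d"
proof (induction d rule: less_induct)
  case (less d)
  show ?case
  proof (cases "d = 1")
    case True
    then have "torsion A d = {\<one>\<^bsub>A\<^esub>}" by (auto simp: torsion_def)
    then show ?thesis
      using torsion_brace_ideal(1)[OF fin ZA ZM less.prems]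
      by (intro exI[of _ "\<lambda>_. torsion A d"] exI[of _ 0]) (simp add: prime_factor_ideal_series_def)
  next
    case False
    obtain q where q: "Factorial_Ring.prime q" "q dvd d"
      and smallest: "\<And>r. Factorial_Ring.prime r \<Longrightarrow> r dvd d \<Longrightarrow> q \<le> r"
      using smallest_prime_factor[OF False] by blast
    define d' where "d' = d div q"
    have d': "tower_divisor (order A) d'"
      unfolding d'_def by (rule tower_divisor_div_smallest_prime[OF less.prems q smallest])
    have "d \<noteq> 0" using less.prems fin A.order_gt_0_iff_finite by (auto simp: tower_divisor_def)
    then have d_eq: "d = d' * q" and "d' < d" using q prime_gt_1_nat by (auto simp: d'_def)
    then obtain I k where I: "prime_factor_ideal_series A M I k" "I k = torsion A d'"
      using less.IH d' by blast
    have sub: "torsion A d' \<subseteq> torsion A d"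
      using d_eq by (auto simp: torsion_def A.nat_pow_pow[symmetric])
    have "card (factor_cosets A (torsion A d') (torsion A d)) * d' = d"
      using card_factor_cosets[OF A.is_group _ _ sub] torsion_brace_ideal[OF fin ZA ZM] less.prems d'
      by (simp add: brace_ideal_def)
    then have "card (factor_cosets A (torsion A d') (torsion A d)) = q" using d_eq \<open>d \<noteq> 0\<close> by simp
    then have "prime_factor_ideal_series A M (I(Suc k := torsion A d)) (Suc k)"
      using prime_factor_ideal_series_snoc[OF I(1) torsion_brace_ideal(1)[OF fin ZA ZM less.prems]] I(2) sub q
      by simp
    then show ?thesis by fastforce
  qed
qed

end

theorem theorem3p8:
  fixes A M :: "'a monoid"
  assumes "brace A M"
    and "finite (carrier A)"
    and "\<And>p P. sylow_subgroup A p P \<Longrightarrow> cyclic_group (subgroup_generated A P)"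
    and "\<And>p P. sylow_subgroup M p P \<Longrightarrow> cyclic_group (subgroup_generated M P)"
  shows "brace_supersoluble A M"
proof -
  have A: "group A" and M: "group M" using assms(1) by (simp_all add: brace_def)
  have ZA: "Z_group A" using Z_groupI[OF A assms(2,3)] .
  have ZM: "Z_group M" using Z_groupI[OF M _ assms(4)] assms(2) brace_carrier_eq[OF assms(1)] by simp
  obtain I k where "prime_factor_ideal_series A M I k" "I k = torsion A (order A)"
    using torsion_ideal_series[OF assms(1,2) ZA ZM tower_divisor_refl] by blast
  moreover have "torsion A (order A) = carrier A"
    using group.pow_order_eq_1[OF A] by (auto simp: torsion_def)
  ultimately show ?thesis using brace_supersoluble_if_prime_factor_ideal_series by simp
qed

end
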